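(* Let $\Theta$ be a hypergraph and $p:V(\Theta)\to\mathbb{R}^d$ a configuration such that the framework $(p,\Theta)$ is affinely rigid in $\mathbb{R}^d$ and the edge directions of the body framework $(p,B(\Theta))$ are not on a conic at infinity. Then $(p,\Theta)$ is universally Euclidean rigid.
   Context: A hypergraph $\Theta$ has a finite vertex set $V$ and hyperedges that are subsets of $V$; a framework $(p,\Theta)$ pairs it with a configuration $p:V\to\mathbb{R}^d$. For a group $G$ acting on $\mathbb{R}^k$, frameworks $(p,\Theta),(q,\Theta)$ in $\mathbb{R}^k$ are $G$-equivalent if for each hyperedge $h$ there is $g_h\in G$ with $g_h(p(u))=q(u)$ for all $u\in h$, and $G$-congruent if one $g\in G$ satisfies $g(p(u))=q(u)$ for all $u\in V$. $(p,\Theta)$ is affinely rigid in $\mathbb{R}^d$ if (with $G$ the group of invertible affine maps of $\mathbb{R}^d$) every framework in $\mathbb{R}^d$ that is $G$-equivalent to it is $G$-congruent to it. Viewing $\mathbb{R}^d\subset\mathbb{R}^{d'}$ ($d'\ge d$) as the first $d$ coordinates, $(p,\Theta)$ is universally Euclidean rigid if for every $d'\ge d$, every framework $(q,\Theta)$ in $\mathbb{R}^{d'}$ that is equivalent to it under the Euclidean isometry group of $\mathbb{R}^{d'}$ is congruent to it under that group. The body graph $B(\Theta)$ is the graph on $V$ with an edge $\{u,w\}$ whenever $u\neq w$ lie in a common hyperedge. The edge directions of a graph framework $(p,\Gamma)$ in $\mathbb{R}^d$ are on a conic at infinity if there is a nonzero symmetric $d\times d$ matrix $Q$ with $(p(u)-p(w))^{T}Q(p(u)-p(w))=0$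 for every edge $\{u,w\}$ of $\Gamma$. *)

theory Defs
  imports Main "HOL-Analysis.Analysis"
begin

text \<open>Points of R^k are represented as functions nat => real vanishing at all
coordinates >= k. Thus R^d is literally the subset of R^d' (d <= d') given by the
first d coordinates.\<close>

definition Rn :: "nat \<Rightarrow> (nat \<Rightarrow> real) set" where
  "Rn k = {x. \<forall>i\<ge>k. x i = 0}"

definition edist :: "nat \<Rightarrow> (nat \<Rightarrow> real) \<Rightarrow> (nat \<Rightarrow> real) \<Rightarrow> real" where
  "edist k x y = sqrt (\<Sum>i<k. (x i - y i)^2)"

definition euclid_isos :: "nat \<Rightarrow> ((nat \<Rightarrow> real) \<Rightarrow> (nat \<Rightarrow> real)) set" where
  "euclid_isos k = {g. (\<forall>x\<in>Rn k. g x \<in> Rn k) \<and>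
      (\<forall>x\<in>Rn k. \<forall>y\<in>Rn k. edist k (g x) (g y) = edist k x y)}"

definition affine_maps :: "nat \<Rightarrow> ((nat \<Rightarrow> real) \<Rightarrow> (nat \<Rightarrow> real)) set" where
  "affine_maps k = {g. \<exists>(A::nat \<Rightarrow> nat \<Rightarrow> real) (b::nat \<Rightarrow> real) B.
      (\<forall>i<k. \<forall>j<k. (\<Sum>l<k. A i l * B l j) = (if i = j then 1 else 0)) \<and>
      (\<forall>x\<in>Rn k. g x = (\<lambda>i. if i < k then (\<Sum>j<k. A i j * x j) + b i else 0))}"

definition hypergraph :: "'v set \<Rightarrow> 'v set set \<Rightarrow> bool" where
  "hypergraph V H \<longleftrightarrow> finite V \<and> (\<forall>h\<in>H. h \<subseteq> V)"

definition G_equivalent ::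
  "((nat \<Rightarrow> real) \<Rightarrow> (nat \<Rightarrow> real)) set \<Rightarrow> 'v set set \<Rightarrow> ('v \<Rightarrow> nat \<Rightarrow> real) \<Rightarrow> ('v \<Rightarrow> nat \<Rightarrow> real) \<Rightarrow> bool" where
  "G_equivalent G H p q \<longleftrightarrow> (\<forall>h\<in>H. \<exists>g\<in>G. \<forall>u\<in>h. g (p u) = q u)"

definition G_congruent ::
  "((nat \<Rightarrow> real) \<Rightarrow> (nat \<Rightarrow> real)) set \<Rightarrow> 'v set \<Rightarrow> ('v \<Rightarrow> nat \<Rightarrow> real) \<Rightarrow> ('v \<Rightarrow> nat \<Rightarrow> real) \<Rightarrow> bool" where
  "G_congruent G V p q \<longleftrightarrow> (\<exists>g\<in>G. \<forall>u\<in>V. g (p u) = q u)"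

definition affinely_rigid :: "nat \<Rightarrow> 'v set \<Rightarrow> 'v set set \<Rightarrow> ('v \<Rightarrow> nat \<Rightarrow> real) \<Rightarrow> bool" where
  "affinely_rigid d V H p \<longleftrightarrow>
     (\<forall>q. (\<forall>u\<in>V. q u \<in> Rn d) \<longrightarrow> G_equivalent (affine_maps d) H p q \<longrightarrow>
          G_congruent (affine_maps d) V p q)"

definition universally_euclidean_rigid :: "nat \<Rightarrow> 'v set \<Rightarrow> 'v set set \<Rightarrow> ('v \<Rightarrow> nat \<Rightarrow> real) \<Rightarrow> bool" where
  "universally_euclidean_rigid d V H p \<longleftrightarrow>
     (\<forall>d'\<ge>d. \<forall>q. (\<forall>u\<in>V. q u \<in> Rn d') \<longrightarrow> G_equivalent (euclid_isos d') H p q \<longrightarrow>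
          G_congruent (euclid_isos d') V p q)"

definition body_edge :: "'v set set \<Rightarrow> 'v \<Rightarrow> 'v \<Rightarrow> bool" where
  "body_edge H u w \<longleftrightarrow> u \<noteq> w \<and> (\<exists>h\<in>H. u \<in> h \<and> w \<in> h)"

definition on_conic_at_infinity :: "nat \<Rightarrow> ('v \<Rightarrow> 'v \<Rightarrow> bool) \<Rightarrow> ('v \<Rightarrow> nat \<Rightarrow> real) \<Rightarrow> bool" where
  "on_conic_at_infinity d E p \<longleftrightarrow>
     (\<exists>Q::nat \<Rightarrow> nat \<Rightarrow> real.
        (\<forall>i<d. \<forall>j<d. Q i j = Q j i) \<and> (\<exists>i<d. \<exists>j<d. Q i j \<noteq> 0) \<and>
        (\<forall>u w. E u w \<longrightarrow>
           (\<Sum>i<d. \<Sum>j<d. (p u i - p w i) * Q i j * (p u j - p w j)) = 0))"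

end

theory Submission
  imports Defs
begin

text \<open>Each hyperedge is moved by an isometry of R^d', an affine map with orthogonal linear
part. Perturbing the first coordinate of p by half of any coordinate of q therefore gives a
configuration that is hyperedge-wise an affine image of p, so affine rigidity forces every
coordinate of q, hence q itself, to be a global affine image A p + b. Body edges keep their
lengths, so every edge direction v satisfies v^T (A^T A - I) v = 0; since the edge directions
lie on no conic at infinity, A^T A = I, and extending the orthonormal columns of A to an
orthonormal basis of R^d' gives a single isometry carrying p to q.\<close>

definition dot :: "nat \<Rightarrow> (nat \<Rightarrow> real) \<Rightarrow> (nat \<Rightarrow> real) \<Rightarrow> real" where
  "dot n x y = (\<Sum>i<n. x i * y i)"

definition orthonormal :: "nat \<Rightarrow> (nat \<Rightarrow> nat \<Rightarrow> real) \<Rightarrow> nat \<Rightarrow> bool" where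
  "orthonormal n b m \<longleftrightarrow> (\<forall>j<m. \<forall>l<m. dot n (b j) (b l) = (if j = l then 1 else 0))"

lemma dot_commute: "dot n x y = dot n y x"
  by (simp add: dot_def mult.commute)

lemma dot_sum_left: "dot n (\<lambda>i. \<Sum>j<m. z j * b j i) y = (\<Sum>j<m. z j * dot n (b j) y)"
  unfolding dot_def by (simp add: sum_distrib_left sum_distrib_right mult_ac sum.swap[of _ "{..<n}"])

lemma dot_sum_right: "dot n x (\<lambda>i. \<Sum>j<m. z j * b j i) = (\<Sum>j<m. z j * dot n x (b j))"
  by (simp add: dot_commute[of n x] dot_sum_left)

lemma dot_orthonormal_combination:
  assumes "orthonormal n b m"
  shows "dot n (\<lambda>i. \<Sum>j<m. z j * b j i) (\<lambda>i. \<Sum>j<m. w j * b j i) = (\<Sum>j<m. z j * w j)"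
proof -
  have "dot n (\<lambda>i. \<Sum>j<m. z j * b j i) (\<lambda>i. \<Sum>j<m. w j * b j i)
      = (\<Sum>j<m. z j * (\<Sum>l<m. w l * dot n (b j) (b l)))"
    by (simp add: dot_sum_left dot_sum_right)
  also have "\<dots> = (\<Sum>j<m. z j * w j)"
    using assms by (intro sum.cong refl) (simp add: orthonormal_def if_distrib[of "(*) _"] cong: if_cong)
  finally show ?thesis .
qed

lemma dot_diff_self: "dot n (x - y) (x - y) = dot n x x - 2 * dot n x y + dot n y y"
proof -
  have "dot n (x - y) (x - y) = (\<Sum>i<n. x i * x i - 2 * (x i * y i) + y i * y i)"
    unfolding dot_def by (intro sum.cong refl) (simp add: algebra_simps)
  then show ?thesis
    by (simp add: dot_def sum.distrib sum_subtractf sum_distrib_left)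
qed

lemma dot_polar: "dot n x y = (dot n x x + dot n y y - dot n (x - y) (x - y)) / 2"
  by (simp add: dot_diff_self)

lemma dot_self_nonneg: "0 \<le> dot n x x"
  unfolding dot_def by (intro sum_nonneg) simp

lemma square_le_dot_self: "i < n \<Longrightarrow> (x i)\<^sup>2 \<le> dot n x x"
  unfolding dot_def power2_eq_square by (rule member_le_sum) auto

lemma dot_self_eq_0_imp: "dot n x x = 0 \<Longrightarrow> i < n \<Longrightarrow> x i = 0"
  using square_le_dot_self[of i n x] by simp

lemma edist_eq_sqrt_dot: "edist n x y = sqrt (dot n (x - y) (x - y))"
  by (simp add: edist_def dot_def power2_eq_square)

lemma Rn_mono: "x \<in> Rn d \<Longrightarrow> d \<le> n \<Longrightarrow> x \<in> Rn n"
  by (auto simp: Rn_def)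

lemma Rn_diff: "x \<in> Rn d \<Longrightarrow> y \<in> Rn d \<Longrightarrow> x - y \<in> Rn d"
  by (simp add: Rn_def)

lemma Rn_eqI:
  assumes "x \<in> Rn n" "y \<in> Rn n" "\<And>k. k < n \<Longrightarrow> x k = y k"
  shows "x = y"
proof
  fix k show "x k = y k" using assms by (cases "k < n") (auto simp: Rn_def)
qed

lemma sum_Rn_truncate:
  assumes "x \<in> Rn d" "d \<le> n"
  shows "(\<Sum>j<n. x j * F j) = (\<Sum>j<d. x j * F j)"
  by (rule sum.mono_neutral_right) (use assms in \<open>auto simp: Rn_def\<close>)

lemma dot_Rn_truncate: "x \<in> Rn d \<Longrightarrow> d \<le> n \<Longrightarrow> dot n x y = dot d x y"
  unfolding dot_def by (rule sum_Rn_truncate)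

lemma exists_unit_orthogonal:
  assumes "m < n" "orthonormal n b m"
  shows "\<exists>c. dot n c c = 1 \<and> (\<forall>j<m. dot n c (b j) = 0)"
proof -
  define r where "r i l = (if l = i then 1 else 0) - (\<Sum>k<m. b k i * b k l)" for i l
  have "\<exists>i<n. r i i \<noteq> 0"
  proof (rule ccontr)
    assume "\<not> ?thesis"
    then have "\<forall>i<n. (\<Sum>k<m. b k i * b k i) = 1" by (auto simp: r_def)
    then have "real n = (\<Sum>i<n. \<Sum>k<m. b k i * b k i)" by simp
    also have "\<dots> = (\<Sum>k<m. dot n (b k) (b k))" unfolding dot_def by (rule sum.swap)
    also have "\<dots> = real m" using assms(2) by (simp add: orthonormal_def)
    finally show False using assms(1) by simp
  qed
  then obtain i where i: "i < n" "r i i \<noteq> 0" by blast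
  have r_orth: "dot n (r i) (b j) = 0" if "j < m" for j
  proof -
    have "dot n (r i) (b j) = b j i - (\<Sum>k<m. b k i * dot n (b k) (b j))"
      using i(1) by (simp add: r_def dot_def left_diff_distrib sum_subtractf sum_distrib_left
          sum_distrib_right mult.assoc sum.swap[of _ "{..<n}"] if_distrib[of "\<lambda>t. t * _"] cong: if_cong)
    also have "(\<Sum>k<m. b k i * dot n (b k) (b j)) = b j i"
      using assms(2) that by (simp add: orthonormal_def if_distrib[of "(*) _"] cong: if_cong)
    finally show ?thesis by simp
  qed
  define s where "s = sqrt (dot n (r i) (r i))"
  have "0 < (r i i)\<^sup>2" using i by simp
  then have pos: "0 < dot n (r i) (r i)"
    using square_le_dot_self[OF i(1), of "r i"] by linarith
  then have s: "0 < s" "s * s = dot n (r i) (r i)" by (simp_all add: s_def)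
  define c where "c l = r i l / s" for l
  have "dot n c c = 1" and "\<forall>j<m. dot n c (b j) = 0"
    using s pos r_orth by (simp_all add: c_def dot_def sum_divide_distrib[symmetric])
  then show ?thesis by blast
qed

lemma orthonormal_extend:
  assumes "m \<le> n" "orthonormal n b m"
  shows "\<exists>b'. orthonormal n b' n \<and> (\<forall>j<m. b' j = b j)"
  using assms
proof (induction "n - m" arbitrary: m b)
  case 0
  then show ?case by auto
next
  case (Suc k)
  then have mn: "m < n" by simp
  then obtain c where c: "dot n c c = 1" "\<forall>j<m. dot n c (b j) = 0"
    using exists_unit_orthogonal Suc.prems(2) by blast
  have "orthonormal n (b(m := c)) (Suc m)"
    using Suc.prems(2) c by (auto simp: orthonormal_def less_Suc_eq dot_commute)
  moreover have "k = n - Suc m" using Suc.hyps(2) by simp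
  ultimately obtain b' where "orthonormal n b' n" "\<forall>j<Suc m. b' j = (b(m := c)) j"
    using Suc.hyps(1) mn by (metis Suc_leI)
  then show ?case by auto
qed

lemma euclid_iso_dot_diff:
  assumes "g \<in> euclid_isos n" "x \<in> Rn n" "y \<in> Rn n"
  shows "dot n (g x - g y) (g x - g y) = dot n (x - y) (x - y)"
  using assms dot_self_nonneg unfolding euclid_isos_def edist_eq_sqrt_dot by auto

lemma euclid_iso_affine:
  assumes g: "g \<in> euclid_isos n"
  shows "\<exists>c M. (\<forall>x\<in>Rn n. \<forall>i<n. g x i = (\<Sum>j<n. M i j * x j) + c i) \<and> (\<forall>i<n. \<forall>j<n. \<bar>M i j\<bar> \<le> 1)"
proof -
  define origin :: "nat \<Rightarrow> real" where "origin = (\<lambda>_. 0)"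
  define f where "f x = g x - g origin" for x
  have zero: "origin \<in> Rn n" by (simp add: Rn_def origin_def)
  have f_norm: "dot n (f x) (f x) = dot n x x" if "x \<in> Rn n" for x
    using euclid_iso_dot_diff[OF g that zero] by (simp add: f_def origin_def fun_diff_def)
  have f_diff: "f x - f y = g x - g y" for x y
    by (simp add: f_def fun_diff_def)
  have f_dot: "dot n (f x) (f y) = dot n x y" if "x \<in> Rn n" "y \<in> Rn n" for x y
    using f_diff dot_polar[of n "f x" "f y"] dot_polar[of n x y] f_norm[OF that(1)] f_norm[OF that(2)]
      euclid_iso_dot_diff[OF g that] by simp
  define e where "e j i = (if i = j then 1 else 0 :: real)" for j i :: nat
  have e_Rn: "e j \<in> Rn n" if "j < n" for j using that by (auto simp: e_def Rn_def)
  have dot_e: "dot n x (e j) = x j" if "j < n" for x j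
    using that by (simp add: dot_def e_def if_distrib[of "(*) _"] cong: if_cong)
  have frame: "orthonormal n (\<lambda>j. f (e j)) n"
    using f_dot e_Rn dot_e by (auto simp: orthonormal_def e_def)
  define M where "M i j = f (e j) i" for i j
  have g_eq: "g x i = (\<Sum>j<n. M i j * x j) + g origin i" if x: "x \<in> Rn n" and i: "i < n" for x i
  proof -
    define y where "y = (\<lambda>i. \<Sum>j<n. x j * f (e j) i)"
    have "dot n (f x) y = (\<Sum>j<n. x j * x j)"
      using f_dot[OF x e_Rn] dot_e by (simp add: y_def dot_sum_right)
    moreover have "dot n y y = (\<Sum>j<n. x j * x j)"
      unfolding y_def by (rule dot_orthonormal_combination[OF frame])
    moreover have "dot n (f x) (f x) = (\<Sum>j<n. x j * x j)"
      using f_norm[OF x] by (simp add: dot_def)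
    ultimately have "dot n (f x - y) (f x - y) = 0" by (simp add: dot_diff_self)
    then have "(f x - y) i = 0" using dot_self_eq_0_imp[OF _ i] by blast
    then show ?thesis by (simp add: f_def y_def M_def mult.commute)
  qed
  have "\<bar>M i j\<bar> \<le> 1" if "i < n" "j < n" for i j
    using square_le_dot_self[OF that(1), of "f (e j)"] frame that
    by (simp add: M_def orthonormal_def abs_square_le_1)
  with g_eq show ?thesis by blast
qed

lemma orthonormal_frame_euclid_iso:
  assumes "orthonormal n b n"
  shows "(\<lambda>x i. if i < n then (\<Sum>j<n. x j * b j i) + t i else 0) \<in> euclid_isos n"
  unfolding euclid_isos_def
proof (intro CollectI conjI ballI)
  fix x y assume "x \<in> Rn n" "y \<in> Rn n"
  let ?g = "\<lambda>x i. if i < n then (\<Sum>j<n. x j * b j i) + t i else 0"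
  have "dot n (?g x - ?g y) (?g x - ?g y)
      = dot n (\<lambda>i. \<Sum>j<n. (x j - y j) * b j i) (\<lambda>i. \<Sum>j<n. (x j - y j) * b j i)"
    unfolding dot_def by (intro sum.cong refl) (simp add: left_diff_distrib sum_subtractf)
  also have "\<dots> = dot n (x - y) (x - y)"
    using dot_orthonormal_combination[OF assms] by (simp add: dot_def)
  finally show "edist n (?g x) (?g y) = edist n x y" by (simp add: edist_eq_sqrt_dot)
qed (simp add: Rn_def)

lemma orthonormal_columns_euclid_iso:
  assumes "d \<le> n" "orthonormal n (\<lambda>j k. A k j) d"
  shows "\<exists>g\<in>euclid_isos n. \<forall>x\<in>Rn d. \<forall>k<n. g x k = (\<Sum>j<d. A k j * x j) + t k"
proof -
  obtain b where b: "orthonormal n b n" "\<forall>j<d. b j = (\<lambda>k. A k j)"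
    using orthonormal_extend[OF assms] by blast
  let ?g = "\<lambda>x i. if i < n then (\<Sum>j<n. x j * b j i) + t i else 0"
  have "?g x k = (\<Sum>j<d. A k j * x j) + t k" if "x \<in> Rn d" "k < n" for x k
    using that b(2) by (simp add: sum_Rn_truncate[OF that(1) assms(1)] mult.commute)
  then show ?thesis by (intro bexI[OF _ orthonormal_frame_euclid_iso[OF b(1), of t]]) simp
qed

text \<open>The matrix identity (I + e_0 a^T) (I - e_0 a^T / (1 + a_0)) = I.\<close>

lemma rank_one_update_inverse:
  fixes a :: "nat \<Rightarrow> real"
  assumes "0 < d" "a 0 \<noteq> -1" "i < d" "j < d"
  shows "(\<Sum>l<d. ((if i = l then 1 else 0) + (if i = 0 then a l else 0)) *
           ((if l = j then 1 else 0) - (if l = 0 then a j / (1 + a 0) else 0)))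
       = (if i = j then 1 else 0)"
proof -
  define s where "s = a j / (1 + a 0)"
  have s: "(1 + a 0) * s = a j" using assms(2) by (simp add: s_def)
  have "(\<Sum>l<d. ((if i = l then 1 else 0) + (if i = 0 then a l else 0)) *
           ((if l = j then 1 else 0) - (if l = 0 then s else 0)))
     = (\<Sum>l<d. (if l = i then (if i = j then 1 else 0) else 0)) - (\<Sum>l<d. (if l = i then (if i = 0 then s else 0) else 0))
       + (\<Sum>l<d. (if l = j then (if i = 0 then a j else 0) else 0)) - (\<Sum>l<d. (if l = 0 then (if i = 0 then a 0 * s else 0) else 0))"
    by (simp only: sum.distrib[symmetric] sum_subtractf[symmetric]) (intro sum.cong refl, auto simp: algebra_simps)
  also have "\<dots> = (if i = j then 1 else 0)"
    using assms s by (auto simp: algebra_simps)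
  finally show ?thesis unfolding s_def .
qed

lemma shear_in_affine_maps:
  fixes a :: "nat \<Rightarrow> real"
  assumes "0 < d" "a 0 \<noteq> -1"
  shows "(\<lambda>x i. if i < d then x i + (if i = 0 then (\<Sum>j<d. a j * x j) + c else 0) else 0)
           \<in> affine_maps d"
  unfolding affine_maps_def
proof (intro CollectI exI conjI)
  define A where "A i j = (if i = j then 1 else 0) + (if i = 0 then a j else 0)" for i j :: nat
  show "\<forall>i<d. \<forall>j<d. (\<Sum>l<d. A i l * ((if l = j then 1 else 0) - (if l = 0 then a j / (1 + a 0) else 0)))
          = (if i = j then 1 else 0)"
    using rank_one_update_inverse[where a=a, OF assms] by (simp add: A_def)
  have "(\<Sum>j<d. A i j * x j) = x i + (if i = 0 then \<Sum>j<d. a j * x j else 0)" if "i < d" for i x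
    using that by (simp add: A_def distrib_right sum.distrib if_distrib[of "\<lambda>t. t * _"] cong: if_cong)
  then show "\<forall>x\<in>Rn d. (\<lambda>i. if i < d then x i + (if i = 0 then (\<Sum>j<d. a j * x j) + c else 0) else 0)
      = (\<lambda>i. if i < d then (\<Sum>j<d. A i j * x j) + (if i = 0 then c else 0) else 0)"
    by auto
qed

lemma affinely_rigid_piecewise_affine:
  fixes f :: "'v \<Rightarrow> real"
  assumes "0 < d" "\<forall>u\<in>V. p u \<in> Rn d" "affinely_rigid d V H p"
    and "\<forall>h\<in>H. \<exists>a c. a 0 \<noteq> -1 \<and> (\<forall>u\<in>h. f u = (\<Sum>j<d. a j * p u j) + c)"
  shows "\<exists>a c. \<forall>u\<in>V. f u = (\<Sum>j<d. a j * p u j) + c"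
proof -
  \<comment> \<open>On each hyperedge q is the image of p under a shear, invertible because a 0 \<noteq> -1.\<close>
  define q where "q u i = (if i < d then p u i + (if i = 0 then f u else 0) else 0)" for u i
  have "G_equivalent (affine_maps d) H p q"
    unfolding G_equivalent_def
  proof
    fix h assume "h \<in> H"
    then obtain a c where "a 0 \<noteq> -1" "\<forall>u\<in>h. f u = (\<Sum>j<d. a j * p u j) + c"
      using assms(4) by blast
    with shear_in_affine_maps[where a=a and c=c, OF assms(1) this(1)]
    show "\<exists>g\<in>affine_maps d. \<forall>u\<in>h. g (p u) = q u"
      by (intro bexI) (auto simp: q_def)
  qed
  moreover have "\<forall>u\<in>V. q u \<in> Rn d" by (simp add: q_def Rn_def)
  ultimately obtain g where g: "g \<in> affine_maps d" "\<forall>u\<in>V. g (p u) = q u"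
    using assms(3) unfolding affinely_rigid_def G_congruent_def by blast
  then obtain A b where "\<forall>x\<in>Rn d. g x = (\<lambda>i. if i < d then (\<Sum>j<d. A i j * x j) + b i else 0)"
    unfolding affine_maps_def by blast
  then have "f u = (\<Sum>j<d. (A 0 j - (if j = 0 then 1 else 0)) * p u j) + b 0" if "u \<in> V" for u
    using fun_cong[OF g(2)[rule_format, OF that], of 0] assms(1,2) that
    by (simp add: q_def left_diff_distrib sum_subtractf if_distrib[of "\<lambda>t. t * _"] cong: if_cong)
  then show ?thesis by (intro exI[of _ "\<lambda>j. A 0 j - (if j = 0 then 1 else 0)"] exI[of _ "b 0"]) blast
qed

lemma euclid_equivalent_affine_image:
  assumes "0 < d" "d \<le> n" "\<forall>h\<in>H. h \<subseteq> V" "\<forall>u\<in>V. p u \<in> Rn d"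
    and "affinely_rigid d V H p" "G_equivalent (euclid_isos n) H p q"
  shows "\<exists>A b. \<forall>k<n. \<forall>u\<in>V. q u k = (\<Sum>j<d. A k j * p u j) + b k"
proof -
  \<comment> \<open>Halving keeps the shear coefficient M k 0 / 2 away from -1, as \<bar>M k 0\<bar> \<le> 1.\<close>
  have half: "\<exists>a c. \<forall>u\<in>V. q u k / 2 = (\<Sum>j<d. a j * p u j) + c" if k: "k < n" for k
  proof (rule affinely_rigid_piecewise_affine[OF assms(1,4,5)])
    show "\<forall>h\<in>H. \<exists>a c. a 0 \<noteq> -1 \<and> (\<forall>u\<in>h. q u k / 2 = (\<Sum>j<d. a j * p u j) + c)"
    proof
      fix h assume h: "h \<in> H"
      then obtain g where g: "g \<in> euclid_isos n" "\<forall>u\<in>h. g (p u) = q u"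
        using assms(6) unfolding G_equivalent_def by blast
      then obtain c M where cM: "\<forall>x\<in>Rn n. \<forall>i<n. g x i = (\<Sum>j<n. M i j * x j) + c i"
        "\<forall>i<n. \<forall>j<n. \<bar>M i j\<bar> \<le> 1"
        using euclid_iso_affine by blast
      have "q u k / 2 = (\<Sum>j<d. M k j / 2 * p u j) + c k / 2" if "u \<in> h" for u
      proof -
        have pu: "p u \<in> Rn d" using that h assms(3,4) by blast
        have "q u k = (\<Sum>j<n. p u j * M k j) + c k"
          using cM(1) g(2) that k Rn_mono[OF pu assms(2)] by (force simp: mult.commute)
        then have "q u k = (\<Sum>j<d. p u j * M k j) + c k"
          by (simp add: sum_Rn_truncate[OF pu assms(2)])
        then show ?thesis by (simp add: sum_divide_distrib[symmetric] mult.commute)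
      qed
      moreover have "M k 0 / 2 \<noteq> -1" using cM(2) k assms(1,2) by force
      ultimately show "\<exists>a c. a 0 \<noteq> -1 \<and> (\<forall>u\<in>h. q u k / 2 = (\<Sum>j<d. a j * p u j) + c)"
        by (intro exI[of _ "\<lambda>j. M k j / 2"] exI[of _ "c k / 2"]) simp
    qed
  qed
  have "\<exists>a c. \<forall>u\<in>V. q u k = (\<Sum>j<d. a j * p u j) + c" if k: "k < n" for k
  proof -
    obtain a c where "\<forall>u\<in>V. q u k / 2 = (\<Sum>j<d. a j * p u j) + c"
      using half[OF k] by blast
    then have "\<forall>u\<in>V. q u k = 2 * ((\<Sum>j<d. a j * p u j) + c)"
      by auto
    then have "\<forall>u\<in>V. q u k = (\<Sum>j<d. (2 * a j) * p u j) + 2 * c"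
      by (simp add: distrib_left sum_distrib_left mult.assoc)
    then show ?thesis by (intro exI[of _ "\<lambda>j. 2 * a j"] exI[of _ "2 * c"])
  qed
  then show ?thesis by metis
qed

lemma gram_quadratic_form:
  "(\<Sum>i<d. \<Sum>j<d. v i * ((\<Sum>k<n. A k i * A k j) - (if i = j then 1 else 0)) * v j)
     = dot n (\<lambda>k. \<Sum>j<d. A k j * v j) (\<lambda>k. \<Sum>j<d. A k j * v j) - dot d v v"
proof -
  have delta: "v i * (v j * (if i = j then 1 else 0)) = (if i = j then v j * v j else 0)" for i j
    by simp
  have "(\<Sum>i<d. \<Sum>j<d. v i * ((\<Sum>k<n. A k i * A k j) - (if i = j then 1 else 0)) * v j)
      = (\<Sum>i<d. \<Sum>j<d. \<Sum>k<n. v i * A k i * A k j * v j)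
        - (\<Sum>i<d. \<Sum>j<d. if i = j then v j * v j else 0)"
    by (simp add: right_diff_distrib left_diff_distrib sum_subtractf sum_distrib_left
        sum_distrib_right mult_ac delta)
  also have "(\<Sum>i<d. \<Sum>j<d. if i = j then v j * v j else 0) = dot d v v"
    by (simp add: dot_def sum.delta')
  also have "(\<Sum>i<d. \<Sum>j<d. \<Sum>k<n. v i * A k i * A k j * v j)
      = dot n (\<lambda>k. \<Sum>j<d. A k j * v j) (\<lambda>k. \<Sum>j<d. A k j * v j)"
    by (simp add: dot_def sum_distrib_left sum_distrib_right mult_ac sum.swap[of _ "{..<n}"])
  finally show ?thesis .
qed

lemma not_conic_imp_orthonormal_columns:
  assumes "\<not> on_conic_at_infinity d E p"
    and "\<forall>u w. E u w \<longrightarrow> dot n (\<lambda>k. \<Sum>j<d. A k j * (p u j - p w j)) (\<lambda>k. \<Sum>j<d. A k j * (p u j - p w j))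
                          = dot d (p u - p w) (p u - p w)"
  shows "orthonormal n (\<lambda>j k. A k j) d"
proof -
  define Q where "Q i j = (\<Sum>k<n. A k i * A k j) - (if i = j then 1 else 0)" for i j
  have "(\<Sum>i<d. \<Sum>j<d. (p u i - p w i) * Q i j * (p u j - p w j)) = 0" if "E u w" for u w
    using gram_quadratic_form[where v = "p u - p w" and A = A and n = n and d = d] assms(2) that
    by (simp add: Q_def fun_diff_def)
  moreover have "\<forall>i<d. \<forall>j<d. Q i j = Q j i" by (simp add: Q_def mult.commute)
  ultimately have "\<not> (\<exists>i<d. \<exists>j<d. Q i j \<noteq> 0)"
    using assms(1) unfolding on_conic_at_infinity_def by (intro notI, elim notE, intro exI[of _ Q]) blast
  then show ?thesis by (simp add: orthonormal_def dot_def Q_def)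
qed

lemma euclid_equivalent_body_edge:
  assumes "G_equivalent (euclid_isos n) H p q" "\<forall>h\<in>H. h \<subseteq> V" "\<forall>u\<in>V. p u \<in> Rn n"
    and "body_edge H u w"
  shows "dot n (q u - q w) (q u - q w) = dot n (p u - p w) (p u - p w)"
proof -
  obtain h where h: "h \<in> H" "u \<in> h" "w \<in> h"
    using assms(4) by (auto simp: body_edge_def)
  then obtain g where g: "g \<in> euclid_isos n" "g (p u) = q u" "g (p w) = q w"
    using assms(1) unfolding G_equivalent_def by blast
  have "p u \<in> Rn n" "p w \<in> Rn n" using h assms(2,3) by auto
  with euclid_iso_dot_diff[OF g(1)] g(2,3) show ?thesis by metis
qed

lemma affine_image_body_edge_length:
  assumes "d \<le> n" "\<forall>h\<in>H. h \<subseteq> V" "\<forall>u\<in>V. p u \<in> Rn d" "G_equivalent (euclid_isos n) H p q"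
    and "\<forall>k<n. \<forall>u\<in>V. q u k = (\<Sum>j<d. A k j * p u j) + b k" and uw: "body_edge H u w"
  shows "dot n (\<lambda>k. \<Sum>j<d. A k j * (p u j - p w j)) (\<lambda>k. \<Sum>j<d. A k j * (p u j - p w j))
       = dot d (p u - p w) (p u - p w)"
proof -
  have u: "u \<in> V" and w: "w \<in> V" using uw assms(2) by (auto simp: body_edge_def)
  have "(\<lambda>k. \<Sum>j<d. A k j * (p u j - p w j)) k = (q u - q w) k" if "k < n" for k
    using assms(5) that u w by (simp add: right_diff_distrib sum_subtractf)
  then have "dot n (\<lambda>k. \<Sum>j<d. A k j * (p u j - p w j)) (\<lambda>k. \<Sum>j<d. A k j * (p u j - p w j))
      = dot n (q u - q w) (q u - q w)"
    unfolding dot_def by (intro sum.cong refl) simp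
  also have "\<dots> = dot n (p u - p w) (p u - p w)"
    using euclid_equivalent_body_edge[OF assms(4,2) _ uw] assms(1,3) Rn_mono by blast
  also have "\<dots> = dot d (p u - p w) (p u - p w)"
    using u w assms(1,3) by (simp add: dot_Rn_truncate Rn_diff)
  finally show ?thesis .
qed

theorem theorem4p2:
  fixes V :: "'v set" and H :: "'v set set" and p :: "'v \<Rightarrow> nat \<Rightarrow> real" and d :: nat
  assumes "d \<ge> 1"
    and "hypergraph V H"
    and "\<forall>u\<in>V. p u \<in> Rn d"
    and "affinely_rigid d V H p"
    and "\<not> on_conic_at_infinity d (body_edge H) p"
  shows "universally_euclidean_rigid d V H p"
  unfolding universally_euclidean_rigid_def
proof (intro allI impI)
  fix d' q
  assume d': "d \<le> d'" and q: "\<forall>u\<in>V. q u \<in> Rn d'" and equiv: "G_equivalent (euclid_isos d') H p q"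
  have edges: "\<forall>h\<in>H. h \<subseteq> V" using assms(2) by (simp add: hypergraph_def)
  obtain A b where Ab: "\<forall>k<d'. \<forall>u\<in>V. q u k = (\<Sum>j<d. A k j * p u j) + b k"
    using euclid_equivalent_affine_image[OF _ d' edges assms(3,4) equiv] assms(1) by auto
  have "orthonormal d' (\<lambda>j k. A k j) d"
    by (rule not_conic_imp_orthonormal_columns[OF assms(5)])
      (use affine_image_body_edge_length[OF d' edges assms(3) equiv Ab] in blast)
  then obtain g where g: "g \<in> euclid_isos d'" "\<forall>x\<in>Rn d. \<forall>k<d'. g x k = (\<Sum>j<d. A k j * x j) + b k"
    using orthonormal_columns_euclid_iso[OF d'] by blast
  have "g (p u) = q u" if u: "u \<in> V" for u
  proof (rule Rn_eqI)
    show "g (p u) \<in> Rn d'" using g(1) Rn_mono[OF _ d'] assms(3) u by (simp add: euclid_isos_def)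
    show "q u \<in> Rn d'" using q u by blast
    show "g (p u) k = q u k" if "k < d'" for k using g(2) Ab assms(3) u that by simp
  qed
  with g(1) show "G_congruent (euclid_isos d') V p q" unfolding G_congruent_def by blast
qed

end
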